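(* Let $(\Omega,\mathcal F,\mu)$ be a measure space, $p\in[1,\infty]$ and $k\ge1$. Then $\mathscr G_{p,k}$ is a closed subset of $L^p(\Omega,\mathcal F,\mu)$.
   Context: All measures are assumed not identically zero. $\mathscr G_{p,k}$ is the set of functions $\sum_{i=1}^l a_i\mathbf 1_{A_i}$ that belong to $L^p(\Omega,\mathcal F,\mu)$, with $l\le k$, $\{A_i\}$ a measurable partition of $\Omega$, $a_i\in\mathbb R$ (viewed as a subset of $L^p$, i.e. up to $\mu$-a.e. equality). *)

theory Defs
  imports "HOL-Analysis.Analysis" "HOL-Probability.Essential_Supremum"
begin

definition Lp_norm :: "'a measure \<Rightarrow> ennreal \<Rightarrow> ('a \<Rightarrow> real) \<Rightarrow> ennreal" where
  "Lp_norm M p f =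
     (if p = top then esssup M (\<lambda>x. ennreal \<bar>f x\<bar>)
      else (let I = (\<integral>\<^sup>+ x. ennreal (\<bar>f x\<bar> powr enn2real p) \<partial>M)
            in if I = top then top else ennreal (enn2real I powr (1 / enn2real p))))"

text \<open>Representatives of elements of L^p(M): measurable functions with finite p-norm.\<close>
definition Lp_space :: "'a measure \<Rightarrow> ennreal \<Rightarrow> ('a \<Rightarrow> real) set" where
  "Lp_space M p = {f \<in> borel_measurable M. Lp_norm M p f < top}"

definition G_set :: "'a measure \<Rightarrow> ennreal \<Rightarrow> nat \<Rightarrow> ('a \<Rightarrow> real) set" where
  "G_set M p k = {f \<in> Lp_space M p. \<exists>l A a. l \<le> k \<and>
      (\<forall>i<l. A i \<in> sets M) \<and>
      (\<forall>i<l. \<forall>j<l. i \<noteq> j \<longrightarrow> A i \<inter> A j = {}) \<and>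
      (\<Union>i<l. A i) = space M \<and>
      (AE x in M. f x = (\<Sum>i<l. a i * indicator (A i) x))}"

text \<open>Closedness of a set of (representatives of) elements of L^p, in the L^p norm topology
  (L^p is a metric space, so sequential closedness is closedness).\<close>
definition Lp_closed :: "'a measure \<Rightarrow> ennreal \<Rightarrow> ('a \<Rightarrow> real) set \<Rightarrow> bool" where
  "Lp_closed M p S \<longleftrightarrow> S \<subseteq> Lp_space M p \<and>
     (\<forall>fs f. (\<forall>n. fs n \<in> S) \<longrightarrow> f \<in> Lp_space M p \<longrightarrow>
        (\<lambda>n. Lp_norm M p (\<lambda>x. fs n x - f x)) \<longlonglongrightarrow> 0 \<longrightarrow> f \<in> S)"

end

theory Submission
  imports Defs
begin

text \<open>A sequence converging in \<open>L\<^sup>p\<close> has a subsequence converging almost everywhere (for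
  \<open>p < \<infinity>\<close> choose the indices so that the \<open>p\<close>-th power integrals are summable). Off a null
  set each term of that subsequence takes at most \<open>k\<close> values, and a pointwise limit of such
  functions takes at most \<open>k\<close> values: any \<open>k + 1\<close> distinct limit values would be separated by
  some single term. A measurable function with at most \<open>k\<close> values almost everywhere is a
  step function over a partition into at most \<open>k\<close> measurable blocks.\<close>

lemma sum_indicator_disjoint_family:
  fixes a :: "nat \<Rightarrow> real"
  assumes "i0 < l" "x \<in> A i0"
    and "\<forall>i<l. \<forall>j<l. i \<noteq> j \<longrightarrow> A i \<inter> A j = {}"
  shows "(\<Sum>i<l. a i * indicator (A i) x) = a i0"
proof -
  have "(\<Sum>i<l. a i * indicator (A i) x) = (\<Sum>i<l. if i = i0 then a i else 0)"
    using assms by (intro sum.cong refl) (auto simp: indicator_def)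
  then show ?thesis using assms(1) by simp
qed

lemma eventually_inj_on_of_tendsto:
  fixes s :: "nat \<Rightarrow> 'a::metric_space \<Rightarrow> 'a"
  assumes "finite W" and lim: "\<And>w. w \<in> W \<Longrightarrow> (\<lambda>j. s j w) \<longlonglongrightarrow> w"
  shows "eventually (\<lambda>j. inj_on (s j) W) sequentially"
proof -
  have "eventually (\<lambda>j. \<forall>w\<in>W. \<forall>w'\<in>W. w \<noteq> w' \<longrightarrow> dist (s j w) (s j w') \<noteq> 0) sequentially"
  proof (intro eventually_ball_finite \<open>finite W\<close> ballI)
    fix w w' assume "w \<in> W" "w' \<in> W"
    then have "(\<lambda>j. dist (s j w) (s j w')) \<longlonglongrightarrow> dist w w'"
      by (intro tendsto_dist lim)
    from tendsto_imp_eventually_ne[OF this, of 0]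
    show "eventually (\<lambda>j. w \<noteq> w' \<longrightarrow> dist (s j w) (s j w') \<noteq> 0) sequentially"
      by (cases "w = w'") auto
  qed
  then show ?thesis
    by eventually_elim (auto simp: inj_on_def)
qed

lemma card_image_le_of_tendsto:
  fixes g :: "nat \<Rightarrow> 'a \<Rightarrow> 'b::metric_space"
  assumes lim: "\<And>x. x \<in> G \<Longrightarrow> (\<lambda>j. g j x) \<longlonglongrightarrow> f x"
    and fin: "\<And>j. finite (g j ` G)" and card: "\<And>j. card (g j ` G) \<le> k"
  shows "finite (f ` G) \<and> card (f ` G) \<le> k"
proof -
  have card_W: "card W \<le> k" if W: "finite W" "W \<subseteq> f ` G" for W
  proof -
    have "\<forall>w\<in>W. \<exists>x\<in>G. f x = w" using W(2) by blast
    then obtain x where x: "\<And>w. w \<in> W \<Longrightarrow> x w \<in> G \<and> f (x w) = w" by metis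
    have "(\<lambda>j. g j (x w)) \<longlonglongrightarrow> w" if "w \<in> W" for w
      using x[OF that] lim by metis
    then have "eventually (\<lambda>j. inj_on (\<lambda>w. g j (x w)) W) sequentially"
      by (rule eventually_inj_on_of_tendsto[OF W(1)])
    then obtain j where "inj_on (\<lambda>w. g j (x w)) W"
      by (auto simp: eventually_sequentially)
    then have "card W = card ((\<lambda>w. g j (x w)) ` W)" by (simp add: card_image)
    also have "\<dots> \<le> card (g j ` G)" using x by (intro card_mono fin) auto
    finally show ?thesis using card order_trans by blast
  qed
  have "finite (f ` G)"
  proof (rule ccontr)
    assume "infinite (f ` G)"
    then obtain W where "finite W" "card W = Suc k" "W \<subseteq> f ` G"
      using infinite_arbitrarily_large by blast
    then show False using card_W by fastforce
  qed
  then show ?thesis using card_W by blast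
qed

lemma nn_integral_tendsto_zero_ex_AE_tendsto_along:
  fixes g :: "nat \<Rightarrow> 'a \<Rightarrow> real"
  assumes meas: "\<And>n. g n \<in> borel_measurable M" and nonneg: "\<And>n x. 0 \<le> g n x"
    and lim: "(\<lambda>n. \<integral>\<^sup>+x. ennreal (g n x) \<partial>M) \<longlonglongrightarrow> 0"
  shows "\<exists>r. AE x in M. (\<lambda>j. g (r j) x) \<longlonglongrightarrow> 0"
proof -
  have "\<exists>n. (\<integral>\<^sup>+x. ennreal (g n x) \<partial>M) < ennreal ((1/2)^j)" for j
    using order_tendstoD(2)[OF lim, of "ennreal ((1/2)^j)"] by (auto dest: eventually_happens)
  then obtain r where r: "\<And>j. (\<integral>\<^sup>+x. ennreal (g (r j) x) \<partial>M) \<le> ennreal ((1/2)^j)"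
    by (metis less_imp_le)
  define G where "G x = (\<Sum>j. ennreal (g (r j) x))" for x
  have "integral\<^sup>N M G = (\<Sum>j. \<integral>\<^sup>+x. ennreal (g (r j) x) \<partial>M)"
    unfolding G_def using meas by (intro nn_integral_suminf) auto
  also have "\<dots> \<le> (\<Sum>j. ennreal ((1/2)^j))" by (intro suminf_le r) auto
  also have "\<dots> = ennreal 2"
    by (subst suminf_ennreal2) (auto simp: suminf_geometric summable_geometric)
  finally have "integral\<^sup>N M G \<noteq> top" by (auto simp: top_unique)
  moreover have "G \<in> borel_measurable M" unfolding G_def using meas by measurable
  ultimately have "AE x in M. G x \<noteq> top" by (metis nn_integral_noteq_infinite infinity_ennreal_def)
  then have "AE x in M. (\<lambda>j. g (r j) x) \<longlonglongrightarrow> 0"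
  proof eventually_elim
    case (elim x)
    then have "summable (\<lambda>j. g (r j) x)"
      unfolding G_def using nonneg by (intro summable_suminf_not_top) auto
    then show ?case by (rule summable_LIMSEQ_zero)
  qed
  then show ?thesis by blast
qed

lemma AE_tendsto_zero_of_esssup_tendsto_zero:
  fixes h :: "nat \<Rightarrow> 'a \<Rightarrow> real"
  assumes lim: "(\<lambda>n. esssup M (\<lambda>x. ennreal \<bar>h n x\<bar>)) \<longlonglongrightarrow> 0"
  shows "AE x in M. (\<lambda>n. h n x) \<longlonglongrightarrow> 0"
proof -
  have "AE x in M. \<forall>n. ennreal \<bar>h n x\<bar> \<le> esssup M (\<lambda>x. ennreal \<bar>h n x\<bar>)"
    by (intro AE_all_countable[THEN iffD2] allI esssup_AE)
  then show ?thesis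
  proof eventually_elim
    case (elim x)
    have "(\<lambda>n. ennreal \<bar>h n x\<bar>) \<longlonglongrightarrow> ennreal 0"
      using tendsto_sandwich[OF _ _ tendsto_const lim] elim by simp
    then have "(\<lambda>n. \<bar>h n x\<bar>) \<longlonglongrightarrow> 0" by (rule tendsto_ennrealD) auto
    then show ?case by (simp add: tendsto_rabs_zero_iff)
  qed
qed

lemma Lp_norm_tendsto_zero_imp_nn_integral_tendsto_zero:
  fixes h :: "nat \<Rightarrow> 'a \<Rightarrow> real"
  assumes "p \<noteq> top"
    and lim: "(\<lambda>n. Lp_norm M p (h n)) \<longlonglongrightarrow> 0"
  shows "(\<lambda>n. \<integral>\<^sup>+x. ennreal (\<bar>h n x\<bar> powr enn2real p) \<partial>M) \<longlonglongrightarrow> 0"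
proof (rule order_tendstoI)
  fix a :: ennreal assume "0 < a"
  then obtain b where b: "0 < b" "b < a" using dense by blast
  define e where "e = enn2real b"
  have e: "0 < e" "ennreal e < a"
    using b by (auto simp: e_def enn2real_positive_iff less_top[symmetric] ennreal_enn2real_if
        intro: less_le_trans)
  define q where "q = enn2real p"
  have "eventually (\<lambda>n. Lp_norm M p (h n) < ennreal (e powr (1/q))) sequentially"
    using e by (intro order_tendstoD(2)[OF lim]) simp
  then show "eventually (\<lambda>n. (\<integral>\<^sup>+x. ennreal (\<bar>h n x\<bar> powr enn2real p) \<partial>M) < a) sequentially"
  proof eventually_elim
    case (elim n)
    define I where "I = (\<integral>\<^sup>+x. ennreal (\<bar>h n x\<bar> powr q) \<partial>M)"
    have "I \<noteq> top" and I: "enn2real I powr (1/q) < e powr (1/q)"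
      using elim \<open>p \<noteq> top\<close>
      by (auto simp: Lp_norm_def I_def q_def Let_def ennreal_less_iff split: if_splits)
    have "enn2real I < e"
      using powr_mono2[of "1/q" e "enn2real I"] I e(1) by (force simp: q_def)
    then have "ennreal (enn2real I) < ennreal e" by (rule ennreal_lessI[OF e(1)])
    then have "I < ennreal e" using \<open>I \<noteq> top\<close> by (metis ennreal_enn2real_if)
    then show ?case using e(2) by (simp add: I_def q_def)
  qed
qed simp

lemma Lp_norm_tendsto_zero_ex_AE_tendsto_along:
  fixes h :: "nat \<Rightarrow> 'a \<Rightarrow> real"
  assumes meas: "\<And>n. h n \<in> borel_measurable M" and "0 < p"
    and lim: "(\<lambda>n. Lp_norm M p (h n)) \<longlonglongrightarrow> 0"
  shows "\<exists>r. AE x in M. (\<lambda>j. h (r j) x) \<longlonglongrightarrow> 0"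
proof (cases "p = top")
  case True
  with lim have "AE x in M. (\<lambda>n. h n x) \<longlonglongrightarrow> 0"
    by (intro AE_tendsto_zero_of_esssup_tendsto_zero) (simp add: Lp_norm_def)
  then show ?thesis by (intro exI[of _ "\<lambda>j. j"])
next
  case False
  define q where "q = enn2real p"
  have "0 < q" using \<open>0 < p\<close> False by (simp add: q_def enn2real_positive_iff top.not_eq_extremum)
  have "\<exists>r. AE x in M. (\<lambda>j. \<bar>h (r j) x\<bar> powr q) \<longlonglongrightarrow> 0"
    using Lp_norm_tendsto_zero_imp_nn_integral_tendsto_zero[OF False lim] meas
    unfolding q_def by (intro nn_integral_tendsto_zero_ex_AE_tendsto_along) auto
  then obtain r where "AE x in M. (\<lambda>j. \<bar>h (r j) x\<bar> powr q) \<longlonglongrightarrow> 0" by blast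
  then have "AE x in M. (\<lambda>j. h (r j) x) \<longlonglongrightarrow> 0"
  proof eventually_elim
    case (elim x)
    then have "(\<lambda>j. (\<bar>h (r j) x\<bar> powr q) powr (1/q)) \<longlonglongrightarrow> 0"
      by (rule tendsto_zero_powrI[OF _ tendsto_const]) (use \<open>0 < q\<close> in auto)
    then show ?case using \<open>0 < q\<close> by (simp add: powr_powr tendsto_rabs_zero_iff)
  qed
  then show ?thesis by blast
qed

lemma G_set_imp_AE_finite_range:
  assumes "f \<in> G_set M p k"
  shows "\<exists>V. finite V \<and> card V \<le> k \<and> (AE x in M. f x \<in> V)"
proof -
  obtain l A a where l: "l \<le> k" and disj: "\<forall>i<l. \<forall>j<l. i \<noteq> j \<longrightarrow> A i \<inter> A j = {}"
    and cover: "(\<Union>i<l. A i) = space M"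
    and f: "AE x in M. f x = (\<Sum>i<l. a i * indicator (A i) x)"
    using assms unfolding G_set_def by blast
  have "AE x in M. f x \<in> a ` {..<l}"
    using f
  proof (rule AE_mp[OF _ AE_I2], intro impI)
    fix x assume "x \<in> space M" and fx: "f x = (\<Sum>i<l. a i * indicator (A i) x)"
    then obtain i0 where "i0 < l" "x \<in> A i0" using cover by blast
    then show "f x \<in> a ` {..<l}"
      using fx sum_indicator_disjoint_family[OF _ _ disj] by auto
  qed
  moreover have "card (a ` {..<l}) \<le> k" using l card_image_le[of "{..<l}" a] by simp
  ultimately show ?thesis by blast
qed

lemma AE_finite_range_imp_G_set:
  assumes f: "f \<in> Lp_space M p" and V: "finite V" "card V \<le> k"
    and AE: "AE x in M. f x \<in> V" and M: "emeasure M (space M) \<noteq> 0"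
  shows "f \<in> G_set M p k"
proof -
  have [measurable]: "f \<in> borel_measurable M" using f by (simp add: Lp_space_def)
  have "V \<noteq> {}" using AE M by (auto simp: AE_iff_measurable[OF _ refl])
  define m where "m = card V"
  obtain h where h: "bij_betw h {..<m} V"
    using bij_betw_from_nat_into_finite[OF V(1)] unfolding m_def by blast
  then have inj: "inj_on h {..<m}" and hV: "h ` {..<m} = V" by (auto simp: bij_betw_def)
  have "0 < m" using \<open>V \<noteq> {}\<close> V(1) by (simp add: m_def card_gt_0_iff)
  \<comment> \<open>the null set where f leaves V is absorbed into the first block\<close>
  define A where "A i = {x \<in> space M. f x = h i \<or> (i = 0 \<and> f x \<notin> V)}" for i
  have disj: "\<forall>i<m. \<forall>j<m. i \<noteq> j \<longrightarrow> A i \<inter> A j = {}"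
    using hV by (auto simp: A_def dest: inj_onD[OF inj])
  have mem_A: "\<exists>i<m. x \<in> A i \<and> (f x \<in> V \<longrightarrow> f x = h i)" if "x \<in> space M" for x
  proof (cases "f x \<in> V")
    case True
    then obtain i where "i < m" "f x = h i" using hV by auto
    then show ?thesis using that by (auto simp: A_def)
  qed (use that \<open>0 < m\<close> in \<open>auto simp: A_def\<close>)
  show ?thesis unfolding G_set_def
  proof (intro CollectI conjI f exI[of _ m] exI[of _ A] exI[of _ h] allI impI)
    show "m \<le> k" using V(2) by (simp add: m_def)
    show "A i \<in> sets M" for i
    proof -
      have "V \<in> sets borel" using V(1) by (simp add: finite_imp_closed)
      then have [measurable]: "Measurable.pred M (\<lambda>x. f x \<in> V)" by measurable
      then show ?thesis
        unfolding A_def by measurable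
    qed
    show "(\<Union>i<m. A i) = space M" using mem_A by (auto simp: A_def)
    show "AE x in M. f x = (\<Sum>i<m. h i * indicator (A i) x)"
      using AE
    proof (rule AE_mp[OF _ AE_I2], intro impI)
      fix x assume "x \<in> space M" "f x \<in> V"
      then show "f x = (\<Sum>i<m. h i * indicator (A i) x)"
        using mem_A sum_indicator_disjoint_family[OF _ _ disj] by metis
    qed
  qed (use disj in blast)
qed

lemma AE_finite_range_of_AE_tendsto:
  fixes g :: "nat \<Rightarrow> 'a \<Rightarrow> 'b::metric_space"
  assumes lim: "AE x in M. (\<lambda>j. g j x) \<longlonglongrightarrow> f x"
    and V: "\<And>j. finite (V j) \<and> card (V j) \<le> k \<and> (AE x in M. g j x \<in> V j)"
  shows "\<exists>W. finite W \<and> card W \<le> k \<and> (AE x in M. f x \<in> W)"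
proof -
  define G where "G = {x \<in> space M. (\<lambda>j. g j x) \<longlonglongrightarrow> f x \<and> (\<forall>j. g j x \<in> V j)}"
  have "AE x in M. \<forall>j. g j x \<in> V j"
    using V by (simp add: AE_all_countable)
  with lim AE_space have "AE x in M. x \<in> G"
    unfolding G_def by eventually_elim simp
  then have "AE x in M. f x \<in> f ` G" by eventually_elim simp
  moreover have "finite (f ` G) \<and> card (f ` G) \<le> k"
  proof (rule card_image_le_of_tendsto)
    show "(\<lambda>j. g j x) \<longlonglongrightarrow> f x" if "x \<in> G" for x using that by (simp add: G_def)
    have "g j ` G \<subseteq> V j" for j by (auto simp: G_def)
    then show "finite (g j ` G)" "card (g j ` G) \<le> k" for j
      using V[of j] by (meson card_mono finite_subset order_trans)+
  qed
  ultimately show ?thesis by blast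
qed

theorem corollary2p14:
  fixes M :: "'a measure" and p :: ennreal and k :: nat
  assumes "emeasure M (space M) \<noteq> 0"
    and "1 \<le> p"
    and "1 \<le> k"
  shows "Lp_closed M p (G_set M p k)"
  unfolding Lp_closed_def
proof (intro conjI allI impI)
  show "G_set M p k \<subseteq> Lp_space M p" by (auto simp: G_set_def)
  fix fs f
  assume fs: "\<forall>n. fs n \<in> G_set M p k" and f: "f \<in> Lp_space M p"
    and lim: "(\<lambda>n. Lp_norm M p (\<lambda>x. fs n x - f x)) \<longlonglongrightarrow> 0"
  have "\<forall>n. \<exists>V. finite V \<and> card V \<le> k \<and> (AE x in M. fs n x \<in> V)"
    using fs G_set_imp_AE_finite_range by blast
  then obtain V where V: "\<And>n. finite (V n) \<and> card (V n) \<le> k \<and> (AE x in M. fs n x \<in> V n)"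
    by metis
  have "0 < p" using zero_less_one \<open>1 \<le> p\<close> by (rule less_le_trans)
  moreover have "(\<lambda>x. fs n x - f x) \<in> borel_measurable M" for n
    using fs f by (intro borel_measurable_diff) (simp_all add: G_set_def Lp_space_def)
  ultimately obtain r where "AE x in M. (\<lambda>j. fs (r j) x) \<longlonglongrightarrow> f x"
    using Lp_norm_tendsto_zero_ex_AE_tendsto_along[of "\<lambda>n x. fs n x - f x", OF _ _ lim]
    by (auto simp: LIM_zero_iff)
  from AE_finite_range_of_AE_tendsto[OF this V] show "f \<in> G_set M p k"
    using AE_finite_range_imp_G_set[OF f] \<open>emeasure M (space M) \<noteq> 0\<close> by blast
qed

end
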